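(* Let $\mathbb{K}\in\{\mathbb{R},\mathbb{C}\}$, $\star\in\{*,T\}$, $\epsilon_1,\epsilon_2\in\{1,-1\}$, and let $Q(\lambda)=\lambda^2M+\lambda D+K\in\mathbb{K}^{n\times n}[\lambda]$ satisfy $M^\star=\epsilon_1M$, $D^\star=\epsilon_2D$, $K^\star=\epsilon_1K$. Let $(X_j,\Lambda_j)\in\mathbb{K}^{n\times p_j}\times\mathbb{K}^{p_j\times p_j}$, $j\in\{1,2\}$, be invariant pairs of $Q(\lambda)$, and set $S_{jk}:=X_j^\star MX_k\Lambda_k+\epsilon_1\epsilon_2\Lambda_j^\star X_j^\star MX_k+X_j^\star DX_k$ for $j,k\in\{1,2\}$. Then: (a) $\lambda_0\in\mathbb{C}$ is an eigenvalue of $Q(\lambda)$ (i.e. $\det(\lambda_0^2M+\lambda_0D+K)=0$) if and only if $\epsilon_1\epsilon_2\lambda_0^\star$ is an eigenvalue of $Q(\lambda)$; (b) $S_{jk}\Lambda_k=\epsilon_1\epsilon_2\Lambda_j^\star S_{jk}$; (c) $S_{jk}=0$ whenever $\sigma(\epsilon_1\epsilon_2\Lambda_j^\star)\cap\sigma(\Lambda_k)=\emptyset$.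
   Context: For a matrix $A$, $A^*$ is the conjugate transpose and $A^T$ the transpose; $A^\star$ means $A^*$ if $\star=*$ and $A^T$ if $\star=T$. For $\lambda\in\mathbb{C}$, $\lambda^\star=\overline{\lambda}$ if $\star=*$ and $\lambda^\star=\lambda$ if $\star=T$. $\sigma(A)$ is the spectrum. A pair $(X,\Lambda)\in\mathbb{K}^{n\times p}\times\mathbb{K}^{p\times p}$ is an invariant pair of $Q(\lambda)$ if $MX\Lambda^2+DX\Lambda+KX=0$. *)

theory Defs
  imports "Jordan_Normal_Form.Spectral_Radius"
begin

(* The operation A^star: conjugate transpose if c (star = * ), plain transpose otherwise (star = T). *)
definition star_mat :: "bool \<Rightarrow> complex mat \<Rightarrow> complex mat" where
  "star_mat c A = (if c then map_mat cnj (transpose_mat A) else transpose_mat A)"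

definition star_sc :: "bool \<Rightarrow> complex \<Rightarrow> complex" where
  "star_sc c z = (if c then cnj z else z)"

definition quad_eigenvalue :: "complex mat \<Rightarrow> complex mat \<Rightarrow> complex mat \<Rightarrow> complex \<Rightarrow> bool" where
  "quad_eigenvalue M D K l \<longleftrightarrow> det ((l^2) \<cdot>\<^sub>m M + l \<cdot>\<^sub>m D + K) = 0"

definition invariant_pair :: "complex mat \<Rightarrow> complex mat \<Rightarrow> complex mat \<Rightarrow> complex mat \<Rightarrow> complex mat \<Rightarrow> bool" where
  "invariant_pair M D K X L \<longleftrightarrow> M * X * L * L + D * X * L + K * X = 0\<^sub>m (dim_row M) (dim_col X)"

definition S_mat :: "bool \<Rightarrow> complex \<Rightarrow> complex \<Rightarrow> complex mat \<Rightarrow> complex mat \<Rightarrow> complex mat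
    \<Rightarrow> complex mat \<Rightarrow> complex mat \<Rightarrow> complex mat \<Rightarrow> complex mat" where
  "S_mat c e1 e2 M D Xj Lj Xk Lk =
     star_mat c Xj * M * Xk * Lk + (e1 * e2) \<cdot>\<^sub>m (star_mat c Lj * star_mat c Xj * M * Xk)
     + star_mat c Xj * D * Xk"

end

theory Submission
  imports Defs
begin

(* (a) Starring Q(l) and using the symmetries gives Q(l)^star = e1 Q(e1 e2 l^star), so both
   determinants vanish together.
   (b) Multiplying the invariance equation of (Xk, Lk) by Xj^star on the left, and the starred
   invariance equation of (Xj, Lj) by Xk on the right, expresses Xj^star K Xk in two ways;
   comparing them gives S Lk = e1 e2 Lj^star S.
   (c) A homogeneous Sylvester equation A X = X B with disjoint spectra has only the solution
   X = 0: triangularise B by Schur and show column by column that X vanishes.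
   Nothing uses that the entries lie in KK, so the real case is covered by the complex one. *)

(* The library's carrier-based laws, restated with dimension side conditions that simp
   can discharge, so that matrix expressions can be normalised by simp. *)
lemma assoc_mult_mat_dim:
  "dim_col A = dim_row B \<Longrightarrow> dim_col B = dim_row C \<Longrightarrow> A * B * C = A * (B * C)"
  by (rule assoc_mult_mat[of A "dim_row A" "dim_col A" B "dim_col B" C "dim_col C"]) auto

lemma add_mult_distrib_mat_dim:
  "dim_row A = dim_row B \<Longrightarrow> dim_col A = dim_col B \<Longrightarrow> dim_col A = dim_row C
    \<Longrightarrow> (A + B) * C = A * C + B * C"
  by (rule add_mult_distrib_mat[of A "dim_row A" "dim_col A"]) auto

lemma mult_add_distrib_mat_dim:
  "dim_row B = dim_row C \<Longrightarrow> dim_col B = dim_col C \<Longrightarrow> dim_col A = dim_row B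
    \<Longrightarrow> A * (B + C) = A * B + A * C"
  by (rule mult_add_distrib_mat[of A "dim_row A" "dim_col A"]) auto

lemma mult_smult_assoc_mat_dim:
  "dim_col A = dim_row B \<Longrightarrow> (k \<cdot>\<^sub>m A) * B = (k :: 'a :: comm_semiring_0) \<cdot>\<^sub>m (A * B)"
  by (rule eq_matI) auto

lemma mult_smult_distrib_dim:
  "dim_col A = dim_row B \<Longrightarrow> A * (k \<cdot>\<^sub>m B) = (k :: 'a :: comm_semiring_0) \<cdot>\<^sub>m (A * B)"
  by (rule eq_matI) auto

lemma right_mult_zero_mat_dim: "dim_col A = n \<Longrightarrow> A * 0\<^sub>m n m = (0\<^sub>m (dim_row A) m :: 'a :: semiring_0 mat)"
  by (rule eq_matI) auto

lemma left_mult_zero_mat_dim: "dim_row A = n \<Longrightarrow> 0\<^sub>m m n * A = (0\<^sub>m m (dim_col A) :: 'a :: semiring_0 mat)"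
  by (rule eq_matI) auto

lemmas mult_mat_dim_simps = assoc_mult_mat_dim add_mult_distrib_mat_dim mult_add_distrib_mat_dim
  mult_smult_assoc_mat_dim mult_smult_distrib_dim right_mult_zero_mat_dim left_mult_zero_mat_dim

lemma eigenvalue_upper_triangular_diag:
  fixes T :: "'a :: field mat"
  assumes T: "T \<in> carrier_mat n n" and ut: "upper_triangular T" and j: "j < n"
  shows "eigenvalue T (T $$ (j,j))"
proof -
  have "T $$ (j,j) \<in> set (diag_mat T)" using T j unfolding diag_mat_def by auto
  then have "poly (char_poly T) (T $$ (j,j)) = 0"
    by (simp add: char_poly_upper_triangular[OF T ut] poly_prod_list)
  then show ?thesis using eigenvalue_root_char_poly[OF T] by simp
qed

lemma col_mult_upper_triangular:
  fixes Y T :: "'a :: comm_ring_1 mat"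
  assumes Y: "Y \<in> carrier_mat p q" and T: "T \<in> carrier_mat q q" and ut: "upper_triangular T"
    and j: "j < q" and left_zero: "\<And>l. l < j \<Longrightarrow> col Y l = 0\<^sub>v p"
  shows "col (Y * T) j = T $$ (j,j) \<cdot>\<^sub>v col Y j"
proof (rule eq_vecI)
  fix i assume "i < dim_vec (T $$ (j,j) \<cdot>\<^sub>v col Y j)"
  then have i: "i < p" using Y by simp
  have "Y $$ (i,l) * T $$ (l,j) = 0" if "l < q" "l \<noteq> j" for l
  proof (cases "l < j")
    case True
    then show ?thesis using left_zero[of l] Y i
      by (metis carrier_matD(1) col_def index_vec index_zero_vec(1) mult_zero_left)
  next
    case False
    then show ?thesis using that T ut by (auto simp: upper_triangular_def)
  qed
  then have "(\<Sum>l<q. Y $$ (i,l) * T $$ (l,j)) = Y $$ (i,j) * T $$ (j,j)"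
    using j by (subst sum.remove[of _ j]) (auto intro: sum.neutral)
  then show "col (Y * T) j $ i = (T $$ (j,j) \<cdot>\<^sub>v col Y j) $ i"
    using Y T i j by (simp add: scalar_prod_def lessThan_atLeast0 mult.commute)
qed (use Y T in auto)

lemma sylvester_upper_triangular_eq_0:
  fixes A T Y :: "'a :: field mat"
  assumes A: "A \<in> carrier_mat p p" and T: "T \<in> carrier_mat q q" and ut: "upper_triangular T"
    and Y: "Y \<in> carrier_mat p q" and AY: "A * Y = Y * T"
    and diag: "\<And>j. j < q \<Longrightarrow> \<not> eigenvalue A (T $$ (j,j))"
  shows "Y = 0\<^sub>m p q"
proof -
  have "col Y j = 0\<^sub>v p" if "j < q" for j
    using that
  proof (induction j rule: less_induct)
    case (less j)
    have "A *\<^sub>v col Y j = col (A * Y) j"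
      by (rule col_mult2[OF A Y less.prems, symmetric])
    also have "\<dots> = T $$ (j,j) \<cdot>\<^sub>v col Y j"
      unfolding AY using less by (intro col_mult_upper_triangular[OF Y T ut]) auto
    finally have "eigenvector A (col Y j) (T $$ (j,j))" if "col Y j \<noteq> 0\<^sub>v p"
      using A Y that col_dim[of Y j] unfolding eigenvector_def by simp
    then show ?case using diag[OF less.prems] unfolding eigenvalue_def by blast
  qed
  note col_zero = this
  have "Y $$ (i,j) = 0" if "i < p" "j < q" for i j
    using col_zero[OF that(2)] index_col[of i Y j] Y that by simp
  then show ?thesis using Y by (intro eq_matI) auto
qed

lemma sylvester_eq_0:
  fixes A B X :: "complex mat"
  assumes A: "A \<in> carrier_mat p p" and B: "B \<in> carrier_mat q q" and X: "X \<in> carrier_mat p q"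
    and AX: "A * X = X * B" and disjoint: "spectrum A \<inter> spectrum B = {}"
  shows "X = 0\<^sub>m p q"
proof -
  obtain es where "char_poly B = (\<Prod>a \<leftarrow> es. [:- a, 1:])"
    using char_poly_factorized[OF B] by blast
  then obtain T where T: "T \<in> carrier_mat q q" and ut: "upper_triangular T" and BT: "similar_mat B T"
    using schur_decomposition_exists[OF B] by blast
  from BT obtain P Q where "similar_mat_wit B T P Q" unfolding similar_mat_def by blast
  from similar_mat_witD2[OF B this] have P: "P \<in> carrier_mat q q" and Q: "Q \<in> carrier_mat q q"
    and PQ: "P * Q = 1\<^sub>m q" and QP: "Q * P = 1\<^sub>m q" and BPTQ: "B = P * T * Q"
    by auto
  have "A * (X * P) = X * B * P"
    using A X P by (simp flip: AX)
  also have "\<dots> = X * P * T * (Q * P)"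
    using X P T Q by (simp add: BPTQ assoc_mult_mat_dim)
  finally have AXP: "A * (X * P) = X * P * T"
    using X P T by (simp add: QP)
  have diag: "\<not> eigenvalue A (T $$ (j,j))" if "j < q" for j
  proof -
    have "eigenvalue B (T $$ (j,j))"
      using eigenvalue_upper_triangular_diag[OF T ut that] char_poly_similar[OF BT]
      by (simp add: eigenvalue_root_char_poly[OF B] eigenvalue_root_char_poly[OF T])
    then show ?thesis using disjoint by (auto simp: spectrum_def)
  qed
  have "X * P = 0\<^sub>m p q"
    using X P by (intro sylvester_upper_triangular_eq_0[OF A T ut _ AXP diag]) auto
  then have "X * P * Q = 0\<^sub>m p q" using Q by simp
  then show ?thesis using X P Q by (simp add: PQ)
qed

lemma star_sc_mult [simp]: "star_sc c (a * b) = star_sc c a * star_sc c b"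
  and star_sc_add [simp]: "star_sc c (a + b) = star_sc c a + star_sc c b"
  and star_sc_power [simp]: "star_sc c (a ^ k) = star_sc c a ^ k"
  and star_sc_sum [simp]: "star_sc c (sum f S) = (\<Sum>x\<in>S. star_sc c (f x))"
  and star_sc_eq_0_iff [simp]: "star_sc c a = 0 \<longleftrightarrow> a = 0"
  by (auto simp: star_sc_def)

lemma dim_row_star_mat [simp]: "dim_row (star_mat c A) = dim_col A"
  and dim_col_star_mat [simp]: "dim_col (star_mat c A) = dim_row A"
  by (auto simp: star_mat_def)

lemma star_mat_carrier: "A \<in> carrier_mat m n \<Longrightarrow> star_mat c A \<in> carrier_mat n m"
  by auto

lemma index_star_mat [simp]:
  "i < dim_col A \<Longrightarrow> j < dim_row A \<Longrightarrow> star_mat c A $$ (i,j) = star_sc c (A $$ (j,i))"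
  by (auto simp: star_mat_def star_sc_def)

lemma star_mat_mult:
  "dim_col A = dim_row B \<Longrightarrow> star_mat c (A * B) = star_mat c B * star_mat c A"
  by (rule eq_matI) (auto simp: scalar_prod_def mult.commute)

lemma star_mat_add:
  "dim_row A = dim_row B \<Longrightarrow> dim_col A = dim_col B \<Longrightarrow> star_mat c (A + B) = star_mat c A + star_mat c B"
  by (rule eq_matI) auto

lemma star_mat_smult: "star_mat c (k \<cdot>\<^sub>m A) = star_sc c k \<cdot>\<^sub>m star_mat c A"
  by (rule eq_matI) auto

lemma star_mat_zero: "star_mat c (0\<^sub>m m n) = 0\<^sub>m n m"
  by (rule eq_matI) auto

lemma det_star_mat:
  assumes "A \<in> carrier_mat n n"
  shows "det (star_mat c A) = star_sc c (det A)"
proof (cases c)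
  case True
  interpret cnj: comm_ring_hom cnj by unfold_locales auto
  show ?thesis
    using True det_transpose[OF assms] by (simp add: star_mat_def star_sc_def)
next
  case False
  then show ?thesis using det_transpose[OF assms] by (simp add: star_mat_def star_sc_def)
qed

lemma star_mat_quadratic:
  assumes M: "M \<in> carrier_mat n n" and D: "D \<in> carrier_mat n n" and K: "K \<in> carrier_mat n n"
    and symM: "star_mat c M = e1 \<cdot>\<^sub>m M" and symD: "star_mat c D = e2 \<cdot>\<^sub>m D"
    and symK: "star_mat c K = e1 \<cdot>\<^sub>m K"
    and e1: "e1 * e1 = 1" and e2: "e2 * e2 = 1"
  shows "star_mat c (l\<^sup>2 \<cdot>\<^sub>m M + l \<cdot>\<^sub>m D + K)
    = e1 \<cdot>\<^sub>m ((e1 * e2 * star_sc c l)\<^sup>2 \<cdot>\<^sub>m M + (e1 * e2 * star_sc c l) \<cdot>\<^sub>m D + K)"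
proof -
  have entry: "s\<^sup>2 * (e1 * m) + s * (e2 * d) + e1 * k = e1 * ((e1 * e2 * s)\<^sup>2 * m + e1 * e2 * s * d + k)"
    for s m d k :: complex
  proof -
    have "e1 * ((e1 * e2 * s)\<^sup>2 * m + e1 * e2 * s * d + k)
        = (e1 * e1) * (e1 * (e2 * e2)) * s\<^sup>2 * m + (e1 * e1) * e2 * s * d + e1 * k"
      by (simp add: power2_eq_square algebra_simps)
    then show ?thesis by (simp add: e1 e2 algebra_simps)
  qed
  have "star_mat c (l\<^sup>2 \<cdot>\<^sub>m M + l \<cdot>\<^sub>m D + K)
      = (star_sc c l)\<^sup>2 \<cdot>\<^sub>m (e1 \<cdot>\<^sub>m M) + star_sc c l \<cdot>\<^sub>m (e2 \<cdot>\<^sub>m D) + e1 \<cdot>\<^sub>m K"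
    using M D K by (simp add: star_mat_add star_mat_smult symM symD symK)
  also have "\<dots> = e1 \<cdot>\<^sub>m ((e1 * e2 * star_sc c l)\<^sup>2 \<cdot>\<^sub>m M + (e1 * e2 * star_sc c l) \<cdot>\<^sub>m D + K)"
  proof (rule eq_matI)
    fix i j assume "i < dim_row (e1 \<cdot>\<^sub>m ((e1 * e2 * star_sc c l)\<^sup>2 \<cdot>\<^sub>m M + (e1 * e2 * star_sc c l) \<cdot>\<^sub>m D + K))"
      "j < dim_col (e1 \<cdot>\<^sub>m ((e1 * e2 * star_sc c l)\<^sup>2 \<cdot>\<^sub>m M + (e1 * e2 * star_sc c l) \<cdot>\<^sub>m D + K))"
    then show "((star_sc c l)\<^sup>2 \<cdot>\<^sub>m (e1 \<cdot>\<^sub>m M) + star_sc c l \<cdot>\<^sub>m (e2 \<cdot>\<^sub>m D) + e1 \<cdot>\<^sub>m K) $$ (i,j)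
      = (e1 \<cdot>\<^sub>m ((e1 * e2 * star_sc c l)\<^sup>2 \<cdot>\<^sub>m M + (e1 * e2 * star_sc c l) \<cdot>\<^sub>m D + K)) $$ (i,j)"
      using M D K by (simp add: entry)
  qed (use M D K in auto)
  finally show ?thesis .
qed

lemma quad_eigenvalue_reflect:
  assumes M: "M \<in> carrier_mat n n" and D: "D \<in> carrier_mat n n" and K: "K \<in> carrier_mat n n"
    and symM: "star_mat c M = e1 \<cdot>\<^sub>m M" and symD: "star_mat c D = e2 \<cdot>\<^sub>m D"
    and symK: "star_mat c K = e1 \<cdot>\<^sub>m K"
    and e1: "e1 * e1 = 1" and e2: "e2 * e2 = 1"
  shows "quad_eigenvalue M D K l \<longleftrightarrow> quad_eigenvalue M D K (e1 * e2 * star_sc c l)"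
proof -
  let ?Q = "\<lambda>l. l\<^sup>2 \<cdot>\<^sub>m M + l \<cdot>\<^sub>m D + K"
  have "star_sc c (det (?Q l)) = det (star_mat c (?Q l))"
    using M D K by (intro det_star_mat[symmetric]) auto
  also have "\<dots> = e1 ^ n * det (?Q (e1 * e2 * star_sc c l))"
    using M D K by (simp add: star_mat_quadratic[OF assms])
  finally have "det (?Q l) = 0 \<longleftrightarrow> det (?Q (e1 * e2 * star_sc c l)) = 0"
    using e1 by (metis mult_eq_0_iff one_neq_zero power_not_zero star_sc_eq_0_iff)
  then show ?thesis unfolding quad_eigenvalue_def .
qed

lemma invariant_pair_mult_left:
  assumes M: "M \<in> carrier_mat n n" and D: "D \<in> carrier_mat n n" and K: "K \<in> carrier_mat n n"
    and X: "X \<in> carrier_mat n p" and L: "L \<in> carrier_mat p p" and Y: "Y \<in> carrier_mat m n"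
    and inv: "invariant_pair M D K X L"
  shows "Y * M * X * L * L + Y * D * X * L + Y * K * X = 0\<^sub>m m p"
proof -
  have "Y * (M * X * L * L + D * X * L + K * X) = 0\<^sub>m m p"
    using inv M X Y unfolding invariant_pair_def by (simp add: right_mult_zero_mat_dim)
  then show ?thesis using M D K X L Y by (simp add: mult_mat_dim_simps)
qed

lemma invariant_pair_star_mult_right:
  assumes M: "M \<in> carrier_mat n n" and D: "D \<in> carrier_mat n n" and K: "K \<in> carrier_mat n n"
    and X: "X \<in> carrier_mat n p" and L: "L \<in> carrier_mat p p" and Z: "Z \<in> carrier_mat n q"
    and symM: "star_mat c M = e1 \<cdot>\<^sub>m M" and symD: "star_mat c D = e2 \<cdot>\<^sub>m D"
    and symK: "star_mat c K = e1 \<cdot>\<^sub>m K"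
    and inv: "invariant_pair M D K X L"
  shows "e1 \<cdot>\<^sub>m (star_mat c L * star_mat c L * (star_mat c X * M * Z))
    + e2 \<cdot>\<^sub>m (star_mat c L * (star_mat c X * D * Z)) + e1 \<cdot>\<^sub>m (star_mat c X * K * Z) = 0\<^sub>m p q"
proof -
  have "star_mat c (M * X * L * L + D * X * L + K * X) * Z = 0\<^sub>m p q"
    using inv M X Z unfolding invariant_pair_def by (simp add: star_mat_zero left_mult_zero_mat_dim)
  then show ?thesis
    using M D K X L Z
    by (simp add: star_mat_mult star_mat_add symM symD symK mult_mat_dim_simps)
qed

lemma sign_twisted_identity:
  fixes e1 e2 :: "'a :: comm_ring_1"
  assumes e1: "e1 * e1 = 1" and e2: "e2 * e2 = 1"
    and right: "x + y + c = 0" and left: "e1 * u + e2 * v + e1 * c = 0"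
  shows "x + e1 * e2 * w + y = e1 * e2 * (w + e1 * e2 * u + v)"
proof -
  have "e1 * (e1 * u + e2 * v + e1 * c) = (e1 * e1) * u + e1 * e2 * v + (e1 * e1) * c"
    by (simp add: algebra_simps)
  then have "u + e1 * e2 * v + c = e1 * (e1 * u + e2 * v + e1 * c)"
    by (simp add: e1)
  then have "x + y = u + e1 * e2 * v"
    using right left by (metis add_right_cancel mult_zero_right)
  then have "x + e1 * e2 * w + y = e1 * e2 * w + (e1 * e1) * (e2 * e2) * u + e1 * e2 * v"
    by (simp add: e1 e2 algebra_simps)
  then show ?thesis by (simp add: algebra_simps)
qed

lemma quadratic_relations_commutation:
  fixes A B C L R :: "'a :: comm_ring_1 mat"
  assumes A: "A \<in> carrier_mat p q" and B: "B \<in> carrier_mat p q" and C: "C \<in> carrier_mat p q"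
    and L: "L \<in> carrier_mat p p" and R: "R \<in> carrier_mat q q"
    and e1: "e1 * e1 = 1" and e2: "e2 * e2 = 1"
    and right: "A * R * R + B * R + C = 0\<^sub>m p q"
    and left: "e1 \<cdot>\<^sub>m (L * L * A) + e2 \<cdot>\<^sub>m (L * B) + e1 \<cdot>\<^sub>m C = 0\<^sub>m p q"
  shows "(A * R + (e1 * e2) \<cdot>\<^sub>m (L * A) + B) * R
    = (e1 * e2) \<cdot>\<^sub>m (L * (A * R + (e1 * e2) \<cdot>\<^sub>m (L * A) + B))"
proof (rule eq_matI)
  fix i j assume "i < dim_row ((e1 * e2) \<cdot>\<^sub>m (L * (A * R + (e1 * e2) \<cdot>\<^sub>m (L * A) + B)))"
    and "j < dim_col ((e1 * e2) \<cdot>\<^sub>m (L * (A * R + (e1 * e2) \<cdot>\<^sub>m (L * A) + B)))"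
  with L B have ij: "i < p" "j < q" by auto
  let ?x = "\<lambda>Z. Z $$ (i,j)"
  have r: "?x (A * (R * R)) + ?x (B * R) + ?x C = 0"
    using arg_cong[OF right, of ?x] A B C R ij by (simp add: mult_mat_dim_simps del: index_mult_mat(1))
  have l: "e1 * ?x (L * (L * A)) + e2 * ?x (L * B) + e1 * ?x C = 0"
    using arg_cong[OF left, of ?x] A B C L ij by (simp add: mult_mat_dim_simps del: index_mult_mat(1))
  have "?x ((A * R + (e1 * e2) \<cdot>\<^sub>m (L * A) + B) * R)
      = ?x (A * (R * R)) + e1 * e2 * ?x (L * (A * R)) + ?x (B * R)"
    using A B L R ij by (simp add: mult_mat_dim_simps del: index_mult_mat(1))
  also have "\<dots> = e1 * e2 * (?x (L * (A * R)) + e1 * e2 * ?x (L * (L * A)) + ?x (L * B))"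
    by (rule sign_twisted_identity[OF e1 e2 r l])
  also have "\<dots> = ?x ((e1 * e2) \<cdot>\<^sub>m (L * (A * R + (e1 * e2) \<cdot>\<^sub>m (L * A) + B)))"
    using A B L R ij by (simp add: mult_mat_dim_simps del: index_mult_mat(1))
  finally show "?x ((A * R + (e1 * e2) \<cdot>\<^sub>m (L * A) + B) * R)
      = ?x ((e1 * e2) \<cdot>\<^sub>m (L * (A * R + (e1 * e2) \<cdot>\<^sub>m (L * A) + B)))" .
qed (use L R B in auto)

lemma S_mat_commutation:
  assumes M: "M \<in> carrier_mat n n" and D: "D \<in> carrier_mat n n" and K: "K \<in> carrier_mat n n"
    and symM: "star_mat c M = e1 \<cdot>\<^sub>m M" and symD: "star_mat c D = e2 \<cdot>\<^sub>m D"
    and symK: "star_mat c K = e1 \<cdot>\<^sub>m K"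
    and e1: "e1 * e1 = 1" and e2: "e2 * e2 = 1"
    and Xj: "Xj \<in> carrier_mat n pj" and Lj: "Lj \<in> carrier_mat pj pj"
    and Xk: "Xk \<in> carrier_mat n pk" and Lk: "Lk \<in> carrier_mat pk pk"
    and inv_j: "invariant_pair M D K Xj Lj" and inv_k: "invariant_pair M D K Xk Lk"
  shows "S_mat c e1 e2 M D Xj Lj Xk Lk * Lk
    = (e1 * e2) \<cdot>\<^sub>m (star_mat c Lj * S_mat c e1 e2 M D Xj Lj Xk Lk)"
proof -
  let ?A = "star_mat c Xj * M * Xk" and ?B = "star_mat c Xj * D * Xk"
    and ?C = "star_mat c Xj * K * Xk" and ?L = "star_mat c Lj"
  have S: "S_mat c e1 e2 M D Xj Lj Xk Lk = ?A * Lk + (e1 * e2) \<cdot>\<^sub>m (?L * ?A) + ?B"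
    unfolding S_mat_def using M Xj Lj Xk by (simp add: assoc_mult_mat_dim)
  have right: "?A * Lk * Lk + ?B * Lk + ?C = 0\<^sub>m pj pk"
    by (rule invariant_pair_mult_left[OF M D K Xk Lk star_mat_carrier[OF Xj] inv_k])
  have left: "e1 \<cdot>\<^sub>m (?L * ?L * ?A) + e2 \<cdot>\<^sub>m (?L * ?B) + e1 \<cdot>\<^sub>m ?C = 0\<^sub>m pj pk"
    by (rule invariant_pair_star_mult_right[OF M D K Xj Lj Xk symM symD symK inv_j])
  have A: "?A \<in> carrier_mat pj pk" and B: "?B \<in> carrier_mat pj pk"
    and C: "?C \<in> carrier_mat pj pk" and L: "?L \<in> carrier_mat pj pj"
    using M D K Xj Lj Xk star_mat_carrier[OF Xj] star_mat_carrier[OF Lj] by auto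
  show ?thesis
    unfolding S by (rule quadratic_relations_commutation[OF A B C L Lk e1 e2 right left])
qed

theorem proposition2p2:
  fixes KK :: "complex set" and c :: bool and e1 e2 :: complex
    and M D K Xj Lj Xk Lk :: "complex mat" and n pj pk :: nat
  assumes KK: "KK = \<real> \<or> KK = UNIV"
    and e1: "e1 = 1 \<or> e1 = -1" and e2: "e2 = 1 \<or> e2 = -1"
    and M: "M \<in> carrier_mat n n" and D: "D \<in> carrier_mat n n" and K: "K \<in> carrier_mat n n"
    and entries: "\<forall>i<n. \<forall>l<n. M $$ (i,l) \<in> KK \<and> D $$ (i,l) \<in> KK \<and> K $$ (i,l) \<in> KK"
    and symM: "star_mat c M = e1 \<cdot>\<^sub>m M" and symD: "star_mat c D = e2 \<cdot>\<^sub>m D"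
    and symK: "star_mat c K = e1 \<cdot>\<^sub>m K"
    and Xj: "Xj \<in> carrier_mat n pj" and Lj: "Lj \<in> carrier_mat pj pj"
    and Xk: "Xk \<in> carrier_mat n pk" and Lk: "Lk \<in> carrier_mat pk pk"
    and entries_j: "(\<forall>i<n. \<forall>l<pj. Xj $$ (i,l) \<in> KK) \<and> (\<forall>i<pj. \<forall>l<pj. Lj $$ (i,l) \<in> KK)"
    and entries_k: "(\<forall>i<n. \<forall>l<pk. Xk $$ (i,l) \<in> KK) \<and> (\<forall>i<pk. \<forall>l<pk. Lk $$ (i,l) \<in> KK)"
    and inv_j: "invariant_pair M D K Xj Lj" and inv_k: "invariant_pair M D K Xk Lk"
  shows "(\<forall>l0. quad_eigenvalue M D K l0 \<longleftrightarrow> quad_eigenvalue M D K (e1 * e2 * star_sc c l0))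
    \<and> S_mat c e1 e2 M D Xj Lj Xk Lk * Lk
        = (e1 * e2) \<cdot>\<^sub>m (star_mat c Lj * S_mat c e1 e2 M D Xj Lj Xk Lk)
    \<and> (spectrum ((e1 * e2) \<cdot>\<^sub>m star_mat c Lj) \<inter> spectrum Lk = {}
        \<longrightarrow> S_mat c e1 e2 M D Xj Lj Xk Lk = 0\<^sub>m pj pk)"
proof (intro conjI allI impI)
  have e1_sq: "e1 * e1 = 1" and e2_sq: "e2 * e2 = 1" using e1 e2 by auto
  note pencil = M D K symM symD symK e1_sq e2_sq
  show "quad_eigenvalue M D K l0 \<longleftrightarrow> quad_eigenvalue M D K (e1 * e2 * star_sc c l0)" for l0
    by (rule quad_eigenvalue_reflect[OF pencil])
  show comm: "S_mat c e1 e2 M D Xj Lj Xk Lk * Lk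
      = (e1 * e2) \<cdot>\<^sub>m (star_mat c Lj * S_mat c e1 e2 M D Xj Lj Xk Lk)"
    by (rule S_mat_commutation[OF pencil Xj Lj Xk Lk inv_j inv_k])
  assume disjoint: "spectrum ((e1 * e2) \<cdot>\<^sub>m star_mat c Lj) \<inter> spectrum Lk = {}"
  have S: "S_mat c e1 e2 M D Xj Lj Xk Lk \<in> carrier_mat pj pk"
    unfolding S_mat_def using M D Xj Lj Xk Lk by (intro carrier_matI) simp_all
  show "S_mat c e1 e2 M D Xj Lj Xk Lk = 0\<^sub>m pj pk"
  proof (rule sylvester_eq_0[OF _ Lk S _ disjoint])
    show "(e1 * e2) \<cdot>\<^sub>m star_mat c Lj \<in> carrier_mat pj pj"
      using star_mat_carrier[OF Lj] by simp
    show "(e1 * e2) \<cdot>\<^sub>m star_mat c Lj * S_mat c e1 e2 M D Xj Lj Xk Lk = S_mat c e1 e2 M D Xj Lj Xk Lk * Lk"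
      using Lj S by (simp add: comm mult_smult_assoc_mat_dim)
  qed
qed

end
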